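(* Let $(\varepsilon_i)_{i\ge0}$ and $(\varepsilon'_i)_{i\ge0}$ belong to $\mathcal{D}^\infty$. Then $$\Big|\sum_{i=0}^{\infty}(\varepsilon_i-\varepsilon'_i)\beta_2^i\Big|\le\frac{1}{1+\beta_2},\qquad \Big|\sum_{i=0}^{\infty}(\varepsilon_i-\varepsilon'_i)\beta_3^i\Big|\le\frac{C}{1-|\beta_3|^6},$$ where $C=\max\{|\sum_{i=0}^5(c_i-d_i)\beta_3^i| : (c_i)_{0\le i\le5},(d_i)_{0\le i\le5}\in\mathcal{D}\}$.
   Context: Let $P(x)=x^4-x^3-x^2-x-1$. Its roots are $\beta_1\approx 1.9275$, a real root $\beta_2\approx-0.7748$, and a pair of complex conjugate roots $\beta_3\approx-0.0763+0.8147i$ and $\overline{\beta_3}$. $\mathcal{D}$ denotes the set of finite $0/1$ words containing no four consecutive $1$'s, and $\mathcal{D}^\infty$ the set of sequences $(\varepsilon_i)_{i\ge l}$, $l\in\mathbb{Z}$, with $\varepsilon_i\in\{0,1\}$ and containing no four consecutive $1$'s. *)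

theory Defs
  imports "HOL-Analysis.Analysis" "HOL-Computational_Algebra.Polynomial"
begin

definition P :: "'a::comm_ring_1 poly" where
  "P = [:-1, -1, -1, -1, 1:]"

text \<open>beta2: the (unique) negative real root of P, approx -0.7748.\<close>
definition beta2 :: real where
  "beta2 = (THE x. poly P x = 0 \<and> x < 0)"

text \<open>beta3: the (unique) complex root of P with positive imaginary part, approx -0.0763+0.8147i.\<close>
definition beta3 :: complex where
  "beta3 = (THE z. poly P z = 0 \<and> Im z > 0)"

definition inD :: "nat list \<Rightarrow> bool" where
  "inD w \<longleftrightarrow> set w \<subseteq> {0, 1} \<and>
     (\<forall>i. i + 3 < length w \<longrightarrow>
        \<not> (w ! i = 1 \<and> w ! (i+1) = 1 \<and> w ! (i+2) = 1 \<and> w ! (i+3) = 1))"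

definition inDinf :: "(nat \<Rightarrow> nat) \<Rightarrow> bool" where
  "inDinf e \<longleftrightarrow> (\<forall>i. e i \<in> {0, 1}) \<and>
     (\<forall>i. \<not> (e i = 1 \<and> e (i+1) = 1 \<and> e (i+2) = 1 \<and> e (i+3) = 1))"

definition C_const :: real where
  "C_const = Max {cmod (\<Sum>i<6. (of_nat (c ! i) - of_nat (d ! i)) * beta3 ^ i) | c d.
                   length c = 6 \<and> length d = 6 \<and> inD c \<and> inD d}"

end

theory Submission
  imports Defs
begin

text \<open>
  Both bounds are geometric-series estimates, since the digit differences lie in {-1, 0, 1}.
  For beta2 one needs -1 < beta2 < 0, so that 1 / (1 - |beta2|) = 1 / (1 + beta2). For beta3
  the series is cut into blocks of six consecutive digits: the k-th block is beta3^(6k) times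
  a sum over two words of D of length six, so its norm is at most C |beta3|^(6k). That
  |beta3| < 1 follows by locating the two real roots a, b of P and factoring
  P(z) = (z - a)(z - b)(z^2 + p z + q): beta3 and its conjugate are the roots of the quadratic
  factor, hence |beta3|^2 = q, and the location of a and b forces q < 1.
\<close>

lemma norm_bounded_digit_le:
  fixes x :: "'a::real_normed_div_algebra"
  assumes "norm d \<le> 1"
  shows "norm (d * x ^ i) \<le> norm x ^ i"
  using assms by (simp add: norm_mult norm_power mult_left_le_one_le)

lemma summable_norm_bounded_digits:
  fixes x :: "'a::real_normed_div_algebra"
  assumes "\<And>i. norm (a i) \<le> 1" and "norm x < 1"
  shows "summable (\<lambda>i. norm (a i * x ^ i))"
proof (rule summable_comparison_test')
  show "summable (\<lambda>i. norm x ^ i)"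
    using assms(2) by (simp add: summable_geometric)
  show "norm (norm (a i * x ^ i)) \<le> norm x ^ i" for i
    using norm_bounded_digit_le[OF assms(1)] by simp
qed

lemma norm_suminf_bounded_digits_le:
  fixes x :: "'a::{real_normed_div_algebra,banach}"
  assumes "\<And>i. norm (a i) \<le> 1" and "norm x < 1"
  shows "norm (\<Sum>i. a i * x ^ i) \<le> 1 / (1 - norm x)"
proof -
  have "norm (\<Sum>i. a i * x ^ i) \<le> (\<Sum>i. norm (a i * x ^ i))"
    by (rule summable_norm[OF summable_norm_bounded_digits[OF assms]])
  also have "\<dots> \<le> (\<Sum>i. norm x ^ i)"
  proof (rule suminf_le)
    show "summable (\<lambda>i. norm x ^ i)"
      using assms(2) by (simp add: summable_geometric)
  qed (use norm_bounded_digit_le[OF assms(1)] summable_norm_bounded_digits[OF assms] in auto)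
  also have "\<dots> = 1 / (1 - norm x)"
    using assms(2) by (simp add: suminf_geometric)
  finally show ?thesis .
qed

lemma norm_suminf_bounded_digits_le_blockwise:
  fixes x :: "'a::{real_normed_field,banach}"
  assumes "\<And>i. norm (a i) \<le> 1" and "norm x < 1" and "0 < m"
    and block: "\<And>k. norm (\<Sum>j<m. a (k * m + j) * x ^ j) \<le> B"
  shows "norm (\<Sum>i. a i * x ^ i) \<le> B / (1 - norm x ^ m)"
proof -
  define r where "r = norm x ^ m"
  have r: "0 \<le> r" "r < 1"
    using assms(2,3) by (auto simp: r_def power_less_one_iff)
  define s where "s k = (\<Sum>i\<in>{k*m..<k*m+m}. a i * x ^ i)" for k
  have "(\<lambda>i. a i * x ^ i) sums (\<Sum>i. a i * x ^ i)"
    using summable_norm_cancel[OF summable_norm_bounded_digits[OF assms(1,2)]]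
    by (simp add: summable_sums)
  then have "s sums (\<Sum>i. a i * x ^ i)"
    unfolding s_def using assms(3) by (rule sums_group)
  then have grouped: "(\<Sum>i. a i * x ^ i) = suminf s"
    by (simp add: sums_unique)
  have s_bound: "norm (s k) \<le> B * r ^ k" for k
  proof -
    have "s k = x ^ (k*m) * (\<Sum>j<m. a (k*m+j) * x ^ j)"
      by (simp add: s_def sum.atLeastLessThan_shift_0[of _ "k*m"] atLeast0LessThan
          sum_distrib_left power_add mult_ac)
    then have "norm (s k) = r ^ k * norm (\<Sum>j<m. a (k*m+j) * x ^ j)"
      by (simp add: norm_mult norm_power r_def flip: power_mult) (simp add: mult.commute)
    also have "\<dots> \<le> r ^ k * B"
      using block r by (intro mult_left_mono) auto
    finally show ?thesis by (simp add: mult.commute)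
  qed
  have geometric: "summable (\<lambda>k. B * r ^ k)"
    using r by (simp add: summable_geometric)
  have s_summable: "summable (\<lambda>k. norm (s k))"
    by (rule summable_comparison_test'[OF geometric]) (use s_bound in simp)
  have "norm (suminf s) \<le> (\<Sum>k. norm (s k))"
    by (rule summable_norm[OF s_summable])
  also have "\<dots> \<le> (\<Sum>k. B * r ^ k)"
    by (rule suminf_le[OF s_bound s_summable geometric])
  also have "\<dots> = B / (1 - r)"
    using r by (simp add: suminf_mult suminf_geometric)
  finally show ?thesis by (simp add: grouped r_def)
qed

lemma poly_P: "poly P x = x^4 - x^3 - x^2 - x - 1"
  by (simp add: P_def algebra_simps power_numeral_reduce)

lemma poly_P_of_real: "poly P (of_real x :: 'a::{real_algebra_1,comm_ring_1}) = of_real (poly P x)"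
  by (simp add: poly_P)

lemma poly_P_factor:
  fixes a b z :: "'a::field"
  assumes "poly P a = 0" and "poly P b = 0" and "a \<noteq> b"
  shows "poly P z = (z - a) * (z - b) * (z^2 + (a + b - 1) * z + ((a + b) * (a + b - 1) - a * b - 1))"
proof -
  define p q where "p = a + b - 1" and "q = (a + b) * (a + b - 1) - a * b - 1"
  \<comment> \<open>the remainder of P modulo (z - a)(z - b) is linear and vanishes at a and b\<close>
  define \<alpha> \<beta> where "\<alpha> = -1 + (a + b) * q - a * b * p" and "\<beta> = -1 - a * b * q"
  have remainder: "poly P w - (w - a) * (w - b) * (w^2 + p * w + q) = \<alpha> * w + \<beta>" for w
    unfolding poly_P \<alpha>_def \<beta>_def p_def q_def
    by (simp add: algebra_simps power2_eq_square power3_eq_cube power4_eq_xxxx)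
  have at_a: "\<alpha> * a + \<beta> = 0" and at_b: "\<alpha> * b + \<beta> = 0"
    using remainder[of a] remainder[of b] assms(1,2) by simp_all
  have "\<alpha> * (a - b) = (\<alpha> * a + \<beta>) - (\<alpha> * b + \<beta>)"
    by (simp add: algebra_simps)
  with at_a at_b have "\<alpha> * (a - b) = 0"
    by simp
  with assms(3) have "\<alpha> = 0"
    by simp
  moreover from this at_a have "\<beta> = 0"
    by simp
  ultimately show ?thesis
    using remainder[of z] by (simp add: p_def q_def)
qed

lemma P_real_roots:
  obtains a b :: real
  where "poly P a = 0" "192/100 \<le> a" "a \<le> 193/100" "poly P b = 0" "-78/100 \<le> b" "b \<le> -77/100"
proof -
  have cont: "continuous_on S (\<lambda>x::real. poly P x)" for S
    by (intro continuous_intros)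
  have "\<exists>x\<ge>192/100. x \<le> 193/100 \<and> poly P x = (0::real)"
    by (rule IVT'[OF _ _ _ cont]) (simp_all add: poly_P power_numeral_reduce)
  moreover have "\<exists>x\<ge>-78/100. x \<le> -77/100 \<and> poly P x = (0::real)"
    by (rule IVT2'[OF _ _ _ cont]) (simp_all add: poly_P power_numeral_reduce)
  ultimately show ?thesis
    using that by blast
qed

lemma P_factorization:
  obtains a b p q :: real
  where "0 < a" "-78/100 \<le> b" "b \<le> -77/100" "p^2 < 4 * q" "q < 1"
    "\<And>z :: real. poly P z = (z - a) * (z - b) * (z^2 + p * z + q)"
    "\<And>z :: complex. poly P z = (z - of_real a) * (z - of_real b) * (z^2 + of_real p * z + of_real q)"
proof -
  obtain a b :: real
    where a: "poly P a = 0" "192/100 \<le> a" "a \<le> 193/100"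
      and b: "poly P b = 0" "-78/100 \<le> b" "b \<le> -77/100"
    by (rule P_real_roots)
  define p t q where "p = a + b - 1" and "t = (a + b) * (a + b - 1)" and "q = t - a * b - 1"
  have "a \<noteq> b"
    using a b by simp
  have "a * b \<le> 192/100 * b"
    using a b by (intro mult_right_mono_neg) auto
  moreover have "a * (-78/100) \<le> a * b"
    using a b by (intro mult_left_mono) auto
  moreover have "t \<le> 116/100 * (16/100)"
    unfolding t_def using a b by (intro mult_mono) auto
  moreover have "114/100 * (14/100) \<le> t"
    unfolding t_def using a b by (intro mult_mono) auto
  ultimately have q: "6/10 \<le> q \<and> q < 1"
    using a b unfolding q_def by linarith
  have "\<bar>p\<bar> \<le> 2/10"
    using a b unfolding p_def by linarith
  then have "p^2 \<le> (2/10)^2"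
    by (intro power2_le_iff_abs_le[THEN iffD2]) simp_all
  with q have "p^2 < 4 * q"
    by (simp add: power_divide)
  moreover have "poly P z = (z - a) * (z - b) * (z^2 + p * z + q)" for z :: real
    using poly_P_factor[OF a(1) b(1) \<open>a \<noteq> b\<close>] by (simp add: p_def q_def t_def)
  moreover have "poly P z = (z - of_real a) * (z - of_real b) * (z^2 + of_real p * z + of_real q)"
    for z :: complex
  proof -
    have "poly P (of_real a :: complex) = 0" "poly P (of_real b :: complex) = 0"
      using a b by (simp_all add: poly_P_of_real)
    from poly_P_factor[OF this] show ?thesis
      using \<open>a \<noteq> b\<close> by (simp add: p_def q_def t_def)
  qed
  ultimately show ?thesis
    using that[of a b p q] a b q by simp
qed

lemma real_quadratic_pos:
  fixes p q y :: real
  assumes "p^2 < 4 * q"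
  shows "0 < y^2 + p * y + q"
proof -
  have "4 * (y^2 + p * y + q) = (2 * y + p)^2 + (4 * q - p^2)"
    by (simp add: algebra_simps power2_eq_square)
  with assms show ?thesis
    by (smt (verit) zero_le_power2)
qed

lemma complex_quadratic_root_upper_iff:
  fixes p q :: real and z :: complex
  assumes "p^2 < 4 * q"
  shows "z^2 + of_real p * z + of_real q = 0 \<and> 0 < Im z \<longleftrightarrow> z = Complex (-p/2) (sqrt (q - p^2/4))"
proof -
  define d where "d = q - p^2/4"
  have d: "0 < d"
    using assms by (simp add: d_def)
  obtain x y where z: "z = Complex x y"
    by (rule complex.exhaust)
  have eq: "z^2 + of_real p * z + of_real q = Complex ((x + p/2)^2 + d - y^2) (2 * y * (x + p/2))"
    by (simp add: z d_def complex_eq_iff power2_eq_square algebra_simps)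
  have "z^2 + of_real p * z + of_real q = 0 \<and> 0 < Im z \<longleftrightarrow> x = -p/2 \<and> y^2 = d \<and> 0 < y"
    unfolding eq by (auto simp: z complex_eq_iff)
  also have "\<dots> \<longleftrightarrow> x = -p/2 \<and> y = sqrt d"
    using d by (auto simp: real_sqrt_unique)
  finally show ?thesis
    by (simp add: z d_def)
qed

lemma norm_complex_quadratic_root:
  fixes p q :: real
  assumes "p^2 < 4 * q"
  shows "cmod (Complex (-p/2) (sqrt (q - p^2/4))) = sqrt q"
  using assms by (simp add: cmod_def power2_eq_square power_divide)

lemma beta2_bounds: "-78/100 \<le> beta2 \<and> beta2 \<le> -77/100"
proof -
  obtain a b p q :: real where ab: "0 < a" "-78/100 \<le> b" "b \<le> -77/100"
    and disc: "p^2 < 4 * q" and "q < 1"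
    and factor: "\<And>z :: real. poly P z = (z - a) * (z - b) * (z^2 + p * z + q)"
    and "\<And>z :: complex.
      poly P z = (z - of_real a) * (z - of_real b) * (z^2 + of_real p * z + of_real q)"
    by (rule P_factorization) blast
  have "beta2 = b"
    unfolding beta2_def
  proof (rule the_equality)
    show "poly P b = 0 \<and> b < 0"
      using ab by (simp add: factor)
    show "y = b" if "poly P y = 0 \<and> y < 0" for y
      using that ab real_quadratic_pos[OF disc, of y] by (auto simp: factor)
  qed
  with ab show ?thesis
    by simp
qed

lemma norm_beta3_less_1: "cmod beta3 < 1"
proof -
  obtain a b p q :: real where "0 < a" "-78/100 \<le> b" "b \<le> -77/100"
    and disc: "p^2 < 4 * q" and "q < 1"
    and "\<And>z :: real. poly P z = (z - a) * (z - b) * (z^2 + p * z + q)"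
    and factor: "\<And>z :: complex.
      poly P z = (z - of_real a) * (z - of_real b) * (z^2 + of_real p * z + of_real q)"
    by (rule P_factorization) blast
  have "poly P z = 0 \<and> 0 < Im z \<longleftrightarrow> z^2 + of_real p * z + of_real q = 0 \<and> 0 < Im z" for z
    by (auto simp: factor)
  then have "beta3 = Complex (-p/2) (sqrt (q - p^2/4))"
    unfolding beta3_def complex_quadratic_root_upper_iff[OF disc] by simp
  then have "cmod beta3 = sqrt q"
    using norm_complex_quadratic_root[OF disc] by simp
  with \<open>q < 1\<close> show ?thesis
    by simp
qed

lemma norm_digit_diff_le_1:
  assumes "inDinf e" and "inDinf e'"
  shows "norm (of_nat (e i) - of_nat (e' i) :: 'a::real_normed_algebra_1) \<le> 1"
proof -
  from assms have "e i \<in> {0, 1}" and "e' i \<in> {0, 1}"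
    by (simp_all add: inDinf_def)
  then show ?thesis
    by auto
qed

lemma inD_block:
  assumes "inDinf e"
  shows "inD (map (\<lambda>j. e (n + j)) [0..<m])"
proof -
  from assms have "e i \<in> {0, 1}" for i
    by (simp add: inDinf_def)
  then have "set (map (\<lambda>j. e (n + j)) [0..<m]) \<subseteq> {0, 1}"
    by (simp add: image_subset_iff del: insert_iff)
  moreover from assms
  have "\<not> (e (n + i) = 1 \<and> e (n + (i + 1)) = 1 \<and> e (n + (i + 2)) = 1 \<and> e (n + (i + 3)) = 1)"
    for i
    unfolding inDinf_def by (metis add.assoc)
  ultimately show ?thesis
    unfolding inD_def by simp
qed

lemma C_const_ge:
  assumes "length c = 6" and "length d = 6" and "inD c" and "inD d"
  shows "cmod (\<Sum>i<6. (of_nat (c ! i) - of_nat (d ! i)) * beta3 ^ i) \<le> C_const"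
proof -
  let ?f = "\<lambda>c d. cmod (\<Sum>i<6. (of_nat (c ! i) - of_nat (d ! i)) * beta3 ^ i)"
  let ?W = "{c :: nat list. set c \<subseteq> {0, 1} \<and> length c = 6}"
  have "finite ?W"
    by (rule finite_lists_length_eq) simp
  moreover have "{?f c d | c d. length c = 6 \<and> length d = 6 \<and> inD c \<and> inD d}
      \<subseteq> case_prod ?f ` (?W \<times> ?W)"
    by (auto simp: inD_def)
  ultimately have "finite {?f c d | c d. length c = 6 \<and> length d = 6 \<and> inD c \<and> inD d}"
    by (meson finite_SigmaI finite_imageI finite_subset)
  then show ?thesis
    unfolding C_const_def by (rule Max_ge) (use assms in blast)
qed

lemma norm_block_sum_le_C_const:
  assumes "inDinf e" and "inDinf e'"
  shows "cmod (\<Sum>j<6. (of_nat (e (n + j)) - of_nat (e' (n + j))) * beta3 ^ j) \<le> C_const"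
proof -
  let ?c = "map (\<lambda>j. e (n + j)) [0..<6]" and ?d = "map (\<lambda>j. e' (n + j)) [0..<6]"
  have "(\<Sum>j<6. (of_nat (e (n + j)) - of_nat (e' (n + j))) * beta3 ^ j)
      = (\<Sum>j<6. (of_nat (?c ! j) - of_nat (?d ! j)) * beta3 ^ j)"
    by (intro sum.cong) auto
  also have "cmod \<dots> \<le> C_const"
    by (intro C_const_ge inD_block assms) simp_all
  finally show ?thesis .
qed

theorem lemma3p2:
  fixes e e' :: "nat \<Rightarrow> nat"
  assumes "inDinf e" and "inDinf e'"
  shows "\<bar>\<Sum>i. (real (e i) - real (e' i)) * beta2 ^ i\<bar> \<le> 1 / (1 + beta2) \<and>
         cmod (\<Sum>i. (of_nat (e i) - of_nat (e' i)) * beta3 ^ i) \<le> C_const / (1 - cmod beta3 ^ 6)"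
proof
  show "\<bar>\<Sum>i. (real (e i) - real (e' i)) * beta2 ^ i\<bar> \<le> 1 / (1 + beta2)"
    using norm_suminf_bounded_digits_le[of "\<lambda>i. real (e i) - real (e' i)" beta2]
      norm_digit_diff_le_1[OF assms, where 'a=real] beta2_bounds by simp
  show "cmod (\<Sum>i. (of_nat (e i) - of_nat (e' i)) * beta3 ^ i) \<le> C_const / (1 - cmod beta3 ^ 6)"
    using norm_suminf_bounded_digits_le_blockwise[of "\<lambda>i. of_nat (e i) - of_nat (e' i)" beta3 6]
      norm_digit_diff_le_1[OF assms, where 'a=complex] norm_block_sum_le_C_const[OF assms]
      norm_beta3_less_1 by simp
qed
end
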